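(* Let $f:[0,1]^d\to\mathbb{R}$ be DR submodular. Let $y:[0,1]\to[0,1]^d$ be coordinatewise non-decreasing, i.e., $y(\mu)\le y(\mu')$ coordinatewise whenever $0\le\mu<\mu'\le1$. Then \[ \int_0^1 f(y(\mu))\,d\mu\le f\Big(\int_0^1y(\mu)\,d\mu\Big). \]
   Context: A smooth (twice continuously differentiable) function $f:[0,1]^d\to\mathbb{R}$ is diminishing-returns (DR) submodular if $\partial_{ij}f(x)\le0$ for all $i,j\in[d]$ and all $x\in[0,1]^d$. *)

theory Defs
  imports "HOL-Analysis.Analysis"
begin

definition unit_cube :: "(real ^ 'n) set" where
  "unit_cube = {x. \<forall>i. 0 \<le> x $ i \<and> x $ i \<le> 1}"

definition DR_submodular :: "(real ^ 'n \<Rightarrow> real) \<Rightarrow> bool" where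
  "DR_submodular f \<longleftrightarrow>
     (\<exists>(f' :: real ^ 'n \<Rightarrow> real ^ 'n) (f'' :: real ^ 'n \<Rightarrow> real ^ 'n ^ 'n).
        (\<forall>x\<in>unit_cube. (f has_derivative (\<lambda>h. f' x \<bullet> h)) (at x within unit_cube)) \<and>
        (\<forall>x\<in>unit_cube. (f' has_derivative (\<lambda>h. f'' x *v h)) (at x within unit_cube)) \<and>
        continuous_on unit_cube f'' \<and>
        (\<forall>x\<in>unit_cube. \<forall>i j. f'' x $ i $ j \<le> 0))"

end

theory Submission
  imports Defs
begin

text \<open>Replace the coordinates of \<open>y\<close> one at a time by their means; once all are replaced,
  \<open>y\<close> has become the constant \<open>\<integral> y\<close>. Each replacement does not decrease \<open>\<integral> f \<circ> y\<close>:
  since \<open>\<partial>\<^sub>i\<^sub>i f \<le> 0\<close>, \<open>f\<close> is concave along coordinate directions, so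
  \<open>f(z) \<le> f(u) + \<partial>\<^sub>i f(u) (z\<^sub>i - m)\<close>, where \<open>u\<close> is \<open>z\<close> with \<open>z\<^sub>i\<close> replaced by its mean \<open>m\<close>.
  Because \<open>\<partial>\<^sub>i\<^sub>j f \<le> 0\<close>, the weight \<open>\<partial>\<^sub>i f(u(\<mu>))\<close> is non-increasing in \<open>\<mu>\<close> while
  \<open>z\<^sub>i(\<mu>) - m\<close> is non-decreasing with integral zero, so the correction term integrates to
  something \<open>\<le> 0\<close>.\<close>

lemma unit_cube_eq_cbox: "unit_cube = cbox 0 (1::real^'n)"
  by (auto simp: unit_cube_def mem_box_cart)

lemma convex_unit_cube: "convex (unit_cube :: (real^'n) set)"
  by (simp add: unit_cube_eq_cbox)

lemma compact_unit_cube: "compact (unit_cube :: (real^'n) set)"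
  by (simp add: unit_cube_eq_cbox)

lemma inner_nonpos_if_nonpos_nonneg:
  fixes u v :: "real^'n"
  assumes "u \<le> 0" "0 \<le> v"
  shows "u \<bullet> v \<le> 0"
  using assms unfolding inner_vec_def less_eq_vec_def
  by (auto intro!: sum_nonpos mult_nonpos_nonneg)

lemma mvt_segment:
  fixes g :: "'a::real_normed_vector \<Rightarrow> real"
  assumes "convex S"
    and der: "\<And>x. x \<in> S \<Longrightarrow> (g has_derivative g' x) (at x within S)"
    and "a \<in> S" "b \<in> S"
  shows "\<exists>t\<in>{0..1}. g b - g a = g' (a + t *\<^sub>R (b - a)) (b - a)"
proof -
  let ?p = "\<lambda>t::real. a + t *\<^sub>R (b - a)"
  have in_S: "?p t \<in> S" if "t \<in> {0..1}" for t
    using convexD_alt[OF \<open>convex S\<close> \<open>a \<in> S\<close> \<open>b \<in> S\<close>, of t] that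
    by (simp add: algebra_simps)
  have "\<exists>t\<in>{0..1}. g (?p 1) - g (?p 0) = g' (?p t) ((1 - 0) *\<^sub>R (b - a))"
  proof (rule mvt_very_simple)
    fix t :: real assume "0 \<le> t" "t \<le> 1"
    have p: "(?p has_derivative (\<lambda>h. h *\<^sub>R (b - a))) (at t within {0..1})"
      by (auto intro!: derivative_eq_intros)
    show "((\<lambda>t. g (?p t)) has_derivative (\<lambda>h. g' (?p t) (h *\<^sub>R (b - a)))) (at t within {0..1})"
      by (rule has_derivative_in_compose2[OF der _ _ p]) (use in_S \<open>0 \<le> t\<close> \<open>t \<le> 1\<close> in auto)
  qed simp
  then show ?thesis by simp
qed

lemma gradient_antimono_if_hessian_nonpos:
  fixes f' :: "real^'n \<Rightarrow> real^'n" and f'' :: "real^'n \<Rightarrow> real^'n^'n"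
  assumes "convex S"
    and der: "\<And>x. x \<in> S \<Longrightarrow> (f' has_derivative (\<lambda>h. f'' x *v h)) (at x within S)"
    and nonpos: "\<And>x i j. x \<in> S \<Longrightarrow> f'' x $ i $ j \<le> 0"
    and "a \<in> S" "b \<in> S" "a \<le> b"
  shows "f' b \<le> f' a"
  unfolding less_eq_vec_def
proof
  fix i
  have der_i: "((\<lambda>x. f' x $ i) has_derivative (\<lambda>h. (f'' x *v h) $ i)) (at x within S)"
    if "x \<in> S" for x
    using bounded_linear.has_derivative[OF bounded_linear_vec_nth der[OF that]] .
  obtain t where "t \<in> {0..1}"
    and mvt: "f' b $ i - f' a $ i = (f'' (a + t *\<^sub>R (b - a)) *v (b - a)) $ i"
    using mvt_segment[OF \<open>convex S\<close> der_i \<open>a \<in> S\<close> \<open>b \<in> S\<close>] by blast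
  then have "a + t *\<^sub>R (b - a) \<in> S"
    using convexD_alt[OF \<open>convex S\<close> \<open>a \<in> S\<close> \<open>b \<in> S\<close>, of t] by (simp add: algebra_simps)
  then have "(f'' (a + t *\<^sub>R (b - a)) *v (b - a)) $ i \<le> 0"
    using nonpos \<open>a \<le> b\<close> unfolding matrix_vector_mult_def less_eq_vec_def
    by (auto intro!: sum_nonpos mult_nonpos_nonneg)
  with mvt show "f' b $ i \<le> f' a $ i" by simp
qed

lemma le_first_order_approx_if_comparable:
  fixes f :: "real^'n \<Rightarrow> real" and f' :: "real^'n \<Rightarrow> real^'n" and f'' :: "real^'n \<Rightarrow> real^'n^'n"
  assumes "convex S"
    and der: "\<And>x. x \<in> S \<Longrightarrow> (f has_derivative (\<lambda>h. f' x \<bullet> h)) (at x within S)"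
    and der2: "\<And>x. x \<in> S \<Longrightarrow> (f' has_derivative (\<lambda>h. f'' x *v h)) (at x within S)"
    and nonpos: "\<And>x i j. x \<in> S \<Longrightarrow> f'' x $ i $ j \<le> 0"
    and "a \<in> S" "b \<in> S" "a \<le> b \<or> b \<le> a"
  shows "f b \<le> f a + f' a \<bullet> (b - a)"
proof -
  obtain t where t: "t \<in> {0..1}" and mvt: "f b - f a = f' (a + t *\<^sub>R (b - a)) \<bullet> (b - a)"
    using mvt_segment[OF \<open>convex S\<close> der \<open>a \<in> S\<close> \<open>b \<in> S\<close>] by blast
  define r where "r = a + t *\<^sub>R (b - a)"
  have "r \<in> S"
    using convexD_alt[OF \<open>convex S\<close> \<open>a \<in> S\<close> \<open>b \<in> S\<close>, of t] t by (simp add: r_def algebra_simps)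
  have antimono: "f' y \<le> f' x" if "x \<in> S" "y \<in> S" "x \<le> y" for x y
    by (rule gradient_antimono_if_hessian_nonpos[of S]) (use assms that in auto)
  have "(f' r - f' a) \<bullet> (b - a) \<le> 0"
    using \<open>a \<le> b \<or> b \<le> a\<close>
  proof
    assume "a \<le> b"
    then have "a \<le> r" using t by (simp add: r_def scaleR_nonneg_nonneg)
    then show ?thesis
      using antimono[OF \<open>a \<in> S\<close> \<open>r \<in> S\<close>] \<open>a \<le> b\<close> by (simp add: inner_nonpos_if_nonpos_nonneg)
  next
    assume "b \<le> a"
    then have "r \<le> a" using t by (simp add: r_def scaleR_nonneg_nonpos)
    then show ?thesis
      using antimono[OF \<open>r \<in> S\<close> \<open>a \<in> S\<close>] \<open>b \<le> a\<close>
      by (metis inner_commute inner_nonpos_if_nonpos_nonneg diff_ge_0_iff_ge diff_le_0_iff_le)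
  qed
  with mvt show ?thesis by (simp add: r_def inner_diff_left)
qed

lemma le_first_order_approx_along_axis:
  fixes f :: "real^'n \<Rightarrow> real" and f' :: "real^'n \<Rightarrow> real^'n" and f'' :: "real^'n \<Rightarrow> real^'n^'n"
  assumes "convex S"
    and "\<And>x. x \<in> S \<Longrightarrow> (f has_derivative (\<lambda>h. f' x \<bullet> h)) (at x within S)"
    and "\<And>x. x \<in> S \<Longrightarrow> (f' has_derivative (\<lambda>h. f'' x *v h)) (at x within S)"
    and "\<And>x i j. x \<in> S \<Longrightarrow> f'' x $ i $ j \<le> 0"
    and "a \<in> S" "(\<chi> k. if k = i then s else a $ k) \<in> S"
  shows "f (\<chi> k. if k = i then s else a $ k) \<le> f a + f' a $ i * (s - a $ i)"
proof -
  let ?b = "\<chi> k. if k = i then s else a $ k"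
  have "?b - a = (s - a $ i) *\<^sub>R axis i 1"
    by (simp add: vec_eq_iff axis_def)
  moreover have "a \<le> ?b \<or> ?b \<le> a"
    by (cases "a $ i \<le> s") (auto simp: less_eq_vec_def)
  ultimately show ?thesis
    using le_first_order_approx_if_comparable[OF assms] by (simp add: cart_eq_inner_axis mult.commute)
qed

text \<open>The constant is the value of \<open>a\<close> at the point where \<open>b\<close> changes sign.\<close>

lemma antimono_mult_mono_le_const_mult:
  fixes a b :: "real \<Rightarrow> real"
  assumes a: "antimono_on {l..u} a" and b: "mono_on {l..u} b" and "l \<le> u"
  obtains c where "\<And>x. x \<in> {l..u} \<Longrightarrow> a x * b x \<le> c * b x"
proof
  define t where "t = Sup (insert l {x\<in>{l..u}. b x < 0})"
  have bdd: "bdd_above (insert l {x\<in>{l..u}. b x < 0})"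
    by (rule bdd_aboveI[of _ u]) (use \<open>l \<le> u\<close> in auto)
  have t: "t \<in> {l..u}"
    unfolding t_def using bdd \<open>l \<le> u\<close> by (auto intro!: cSup_upper cSup_least)
  fix x assume x: "x \<in> {l..u}"
  consider "b x < 0" | "b x = 0" | "b x > 0" by linarith
  then show "a x * b x \<le> a t * b x"
  proof cases
    case 1
    then have "x \<le> t" unfolding t_def using x bdd by (auto intro!: cSup_upper)
    then have "a t \<le> a x" using a x t by (auto simp: monotone_on_def)
    with 1 show ?thesis by (simp add: mult_right_mono_neg)
  next
    case 3
    have "t \<le> x"
    proof (rule ccontr)
      assume "\<not> t \<le> x"
      then obtain s where s: "s \<in> insert l {x\<in>{l..u}. b x < 0}" "x < s"
        using less_cSupD[of _ x] unfolding t_def by (metis empty_not_insert not_le)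
      then have "b x \<le> b s" using b x by (auto simp: monotone_on_def)
      with s x 3 show False by auto
    qed
    then have "a x \<le> a t" using a x t by (auto simp: monotone_on_def)
    with 3 show ?thesis by (simp add: mult_right_mono)
  qed simp
qed

lemma mono_on_vec_nth: "mono_on S z \<Longrightarrow> mono_on S (\<lambda>x. z x $ i)"
  by (auto simp: monotone_on_def less_eq_vec_def)

lemma integrable_on_mono_on_cart:
  fixes z :: "real \<Rightarrow> real^'n"
  assumes "mono_on {a..b} z"
  shows "z integrable_on {a..b}"
proof (rule integrable_componentwise)
  fix e :: "real^'n" assume "e \<in> Basis"
  then obtain k where "e = axis k 1" by (auto simp: Basis_vec_def)
  then show "(\<lambda>x. z x \<bullet> e) integrable_on {a..b}"
    using integrable_on_mono_on[OF mono_on_vec_nth[OF assms]] by (simp add: cart_eq_inner_axis)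
qed

text \<open>The nearest-point retraction onto \<open>S\<close> extends \<open>f\<close> continuously to the whole space, which
  makes \<open>f \<circ> z\<close> measurable.\<close>

lemma integrable_on_continuous_comp_measurable:
  fixes f :: "'a::euclidean_space \<Rightarrow> real" and z :: "real \<Rightarrow> 'a"
  assumes f: "continuous_on S f" and S: "compact S" "convex S"
    and z: "z \<in> borel_measurable (lebesgue_on {a..b})" and zS: "z ` {a..b} \<subseteq> S"
  shows "(\<lambda>x. f (z x)) integrable_on {a..b}"
proof (cases "S = {}")
  case False
  let ?g = "f \<circ> closest_point S"
  have "continuous_on UNIV ?g"
    using continuous_on_closest_point[OF \<open>convex S\<close> compact_imp_closed[OF \<open>compact S\<close>] False]
    by (intro continuous_on_compose continuous_on_subset[OF f])
      (auto intro: closest_point_in_set[OF compact_imp_closed[OF \<open>compact S\<close>] False])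
  then have meas: "(\<lambda>x. ?g (z x)) \<in> borel_measurable (lebesgue_on {a..b})"
    using measurable_compose[OF z borel_measurable_continuous_onI] by (simp add: o_def)
  obtain B where B: "\<And>y. y \<in> S \<Longrightarrow> \<bar>f y\<bar> \<le> B"
    using compact_imp_bounded[OF compact_continuous_image[OF f \<open>compact S\<close>]]
    by (auto simp: bounded_iff)
  have "(\<lambda>x. ?g (z x)) integrable_on {a..b}"
    by (rule measurable_bounded_by_integrable_imp_integrable_real[OF meas, of "\<lambda>_. B"])
      (use B zS in \<open>auto simp: closest_point_self image_subset_iff\<close>)
  then show ?thesis
    by (rule integrable_eq) (use zS in \<open>auto simp: closest_point_self image_subset_iff\<close>)
qed (use zS in auto)

lemma integral_in_unit_cube:
  fixes z :: "real \<Rightarrow> real^'n"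
  assumes "z integrable_on {0..1}" "z ` {0..1} \<subseteq> unit_cube"
  shows "integral {0..1} z \<in> unit_cube"
  unfolding unit_cube_def
proof (intro CollectI allI conjI)
  fix i
  have I: "(\<lambda>\<mu>. z \<mu> $ i) integrable_on {0..1}"
    using integrable_linear[OF assms(1) bounded_linear_vec_nth] by (simp add: o_def)
  have "integral {0..1} (\<lambda>\<mu>::real. 0::real) \<le> integral {0..1} (\<lambda>\<mu>. z \<mu> $ i)"
    by (rule integral_le[OF _ I]) (use assms(2) in \<open>auto simp: unit_cube_def image_subset_iff\<close>)
  then show "0 \<le> integral {0..1} z $ i" using assms(1) by simp
  have "integral {0..1} (\<lambda>\<mu>. z \<mu> $ i) \<le> integral {0..1} (\<lambda>\<mu>::real. 1::real)"
    by (rule integral_le[OF I]) (use assms(2) in \<open>auto simp: unit_cube_def image_subset_iff\<close>)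
  then show "integral {0..1} z $ i \<le> 1" using assms(1) by simp
qed

lemma integral_le_if_le_add_mult_integral_zero:
  fixes g h b :: "'a::euclidean_space \<Rightarrow> real"
  assumes "g integrable_on S" "h integrable_on S" "b integrable_on S" "integral S b = 0"
    and "\<And>x. x \<in> S \<Longrightarrow> g x \<le> h x + c * b x"
  shows "integral S g \<le> integral S h"
proof -
  have "integral S g \<le> integral S (\<lambda>x. h x + c * b x)"
    using assms by (intro integral_le integrable_add integrable_on_mult_right) auto
  also have "\<dots> = integral S h"
    using assms by (simp add: integral_add integrable_on_mult_right)
  finally show ?thesis .
qed

lemma DR_submodular_continuous_on:
  assumes "DR_submodular f"
  shows "continuous_on unit_cube f"
proof -
  obtain f' where "\<forall>x\<in>unit_cube. (f has_derivative (\<lambda>h. f' x \<bullet> h)) (at x within unit_cube)"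
    using assms unfolding DR_submodular_def by blast
  then show ?thesis
    using has_derivative_continuous_on[of unit_cube f "\<lambda>x h. f' x \<bullet> h"] by blast
qed

lemma DR_submodular_integrable_on_comp:
  fixes f :: "real^'n \<Rightarrow> real" and z :: "real \<Rightarrow> real^'n"
  assumes "DR_submodular f" "mono_on {0..1} z" "z ` {0..1} \<subseteq> unit_cube"
  shows "(\<lambda>\<mu>. f (z \<mu>)) integrable_on {0..1}"
  using integrable_on_continuous_comp_measurable[OF DR_submodular_continuous_on[OF assms(1)]
      compact_unit_cube convex_unit_cube integrable_imp_measurable[OF integrable_on_mono_on_cart]]
    assms(2,3) .

lemma integral_le_integral_coordinate_mean:
  fixes f :: "real^'n \<Rightarrow> real" and z :: "real \<Rightarrow> real^'n"
  assumes "DR_submodular f" and z_mono: "mono_on {0..1} z" and z_cube: "z ` {0..1} \<subseteq> unit_cube"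
  shows "integral {0..1} (\<lambda>\<mu>. f (z \<mu>)) \<le>
    integral {0..1} (\<lambda>\<mu>. f (\<chi> k. if k = i then integral {0..1} (\<lambda>\<nu>. z \<nu> $ i) else z \<mu> $ k))"
proof -
  obtain f' :: "real^'n \<Rightarrow> real^'n" and f'' :: "real^'n \<Rightarrow> real^'n^'n" where
    der: "\<And>x. x \<in> unit_cube \<Longrightarrow> (f has_derivative (\<lambda>h. f' x \<bullet> h)) (at x within unit_cube)"
    and der2: "\<And>x. x \<in> unit_cube \<Longrightarrow> (f' has_derivative (\<lambda>h. f'' x *v h)) (at x within unit_cube)"
    and nonpos: "\<And>x i j. x \<in> unit_cube \<Longrightarrow> f'' x $ i $ j \<le> 0"
    using \<open>DR_submodular f\<close> unfolding DR_submodular_def by blast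
  have z_int: "z integrable_on {0..1}"
    using z_mono by (rule integrable_on_mono_on_cart)
  define m where "m = integral {0..1} (\<lambda>\<nu>. z \<nu> $ i)"
  define u where "u \<mu> = (\<chi> k. if k = i then m else z \<mu> $ k)" for \<mu>
  have "0 \<le> m" "m \<le> 1"
    using integral_in_unit_cube[OF z_int z_cube] z_int by (simp_all add: m_def unit_cube_def)
  then have u_cube: "u ` {0..1} \<subseteq> unit_cube"
    using z_cube by (auto simp: u_def unit_cube_def)
  have u_mono: "mono_on {0..1} u"
    using z_mono by (auto simp: u_def monotone_on_def less_eq_vec_def)
  define a where "a \<mu> = f' (u \<mu>) $ i" for \<mu>
  define b where "b \<mu> = z \<mu> $ i - m" for \<mu>
  have "antimono_on {0..1} a"
    using gradient_antimono_if_hessian_nonpos[OF convex_unit_cube der2 nonpos] u_mono u_cube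
    by (auto simp: monotone_on_def a_def less_eq_vec_def image_subset_iff)
  moreover have "mono_on {0..1} b"
    using mono_on_vec_nth[OF z_mono] by (auto simp: monotone_on_def b_def)
  ultimately obtain c where c: "\<And>\<mu>. \<mu> \<in> {0..1} \<Longrightarrow> a \<mu> * b \<mu> \<le> c * b \<mu>"
    using antimono_mult_mono_le_const_mult by (metis zero_le_one)
  have pointwise: "f (z \<mu>) \<le> f (u \<mu>) + c * b \<mu>" if "\<mu> \<in> {0..1}" for \<mu>
  proof -
    have "z \<mu> = (\<chi> k. if k = i then z \<mu> $ i else u \<mu> $ k)"
      by (simp add: vec_eq_iff u_def)
    then have "f (z \<mu>) \<le> f (u \<mu>) + a \<mu> * b \<mu>"
      using le_first_order_approx_along_axis[OF convex_unit_cube der der2 nonpos, of "u \<mu>" i "z \<mu> $ i"]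
        u_cube z_cube that
      by (simp add: a_def b_def u_def image_subset_iff)
    with c[OF that] show ?thesis by linarith
  qed
  have z_i_int: "(\<lambda>\<mu>. z \<mu> $ i) integrable_on {0..1}"
    using integrable_on_mono_on[OF mono_on_vec_nth[OF z_mono]] .
  have "b integrable_on {0..1}" "integral {0..1} b = 0"
    using z_i_int unfolding b_def[abs_def]
    by (auto simp: m_def integral_diff[OF _ integrable_const_ivl] intro: integrable_diff)
  with pointwise have "integral {0..1} (\<lambda>\<mu>. f (z \<mu>)) \<le> integral {0..1} (\<lambda>\<mu>. f (u \<mu>))"
    using DR_submodular_integrable_on_comp[OF \<open>DR_submodular f\<close>] z_mono z_cube u_mono u_cube
    by (intro integral_le_if_le_add_mult_integral_zero) auto
  then show ?thesis unfolding u_def m_def .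
qed

lemma integral_le_integral_partial_mean:
  fixes f :: "real^'n \<Rightarrow> real" and y :: "real \<Rightarrow> real^'n"
  assumes "DR_submodular f" "mono_on {0..1} y" "y ` {0..1} \<subseteq> unit_cube" "finite K"
  shows "integral {0..1} (\<lambda>\<mu>. f (y \<mu>)) \<le>
    integral {0..1} (\<lambda>\<mu>. f (\<chi> k. if k \<in> K then integral {0..1} (\<lambda>\<nu>. y \<nu> $ k) else y \<mu> $ k))"
  using \<open>finite K\<close>
proof (induction K rule: finite_induct)
  case empty
  then show ?case by simp
next
  case (insert i K)
  define w where "w \<mu> = (\<chi> k. if k \<in> K then integral {0..1} (\<lambda>\<nu>. y \<nu> $ k) else y \<mu> $ k)" for \<mu>
  have "mono_on {0..1} w"
    using assms(2) by (auto simp: w_def monotone_on_def less_eq_vec_def)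
  moreover have "w ` {0..1} \<subseteq> unit_cube"
    using assms(3) integral_in_unit_cube[OF integrable_on_mono_on_cart[OF assms(2)] assms(3)]
      integrable_on_mono_on_cart[OF assms(2)]
    by (auto simp: w_def unit_cube_def image_subset_iff)
  ultimately have "integral {0..1} (\<lambda>\<mu>. f (w \<mu>)) \<le>
    integral {0..1} (\<lambda>\<mu>. f (\<chi> k. if k = i then integral {0..1} (\<lambda>\<nu>. w \<nu> $ i) else w \<mu> $ k))"
    by (rule integral_le_integral_coordinate_mean[OF \<open>DR_submodular f\<close>])
  also have "(\<lambda>\<mu>. f (\<chi> k. if k = i then integral {0..1} (\<lambda>\<nu>. w \<nu> $ i) else w \<mu> $ k)) =
    (\<lambda>\<mu>. f (\<chi> k. if k \<in> insert i K then integral {0..1} (\<lambda>\<nu>. y \<nu> $ k) else y \<mu> $ k))"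
    using \<open>i \<notin> K\<close> by (auto simp: w_def vec_eq_iff intro!: arg_cong[where f = f])
  finally show ?case
    using insert.IH unfolding w_def by linarith
qed

theorem mainTheorem9:
  fixes f :: "real ^ 'n \<Rightarrow> real" and y :: "real \<Rightarrow> real ^ 'n"
  assumes "DR_submodular f"
    and "\<forall>\<mu>\<in>{0..1}. y \<mu> \<in> unit_cube"
    and "\<forall>\<mu> \<mu>'. 0 \<le> \<mu> \<and> \<mu> < \<mu>' \<and> \<mu>' \<le> 1 \<longrightarrow> (\<forall>i. y \<mu> $ i \<le> y \<mu>' $ i)"
  shows "integral {0..1} (\<lambda>\<mu>. f (y \<mu>)) \<le> f (integral {0..1} y)"
proof -
  have mono: "mono_on {0..1} y"
  proof (rule mono_onI)
    fix \<mu> \<mu>' :: real assume "\<mu> \<in> {0..1}" "\<mu>' \<in> {0..1}" "\<mu> \<le> \<mu>'"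
    then show "y \<mu> \<le> y \<mu>'"
      using assms(3) by (cases "\<mu> = \<mu>'") (auto simp: less_eq_vec_def)
  qed
  have "(\<chi> k. integral {0..1} (\<lambda>\<nu>. y \<nu> $ k)) = integral {0..1} y"
    using integrable_on_mono_on_cart[OF mono] by (simp add: vec_eq_iff)
  moreover have "y ` {0..1} \<subseteq> unit_cube"
    using assms(2) by auto
  ultimately show ?thesis
    using integral_le_integral_partial_mean[OF assms(1) mono, of UNIV] by simp
qed

end
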